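(* For every $k\geq 2$, $q(G_k)=q(G'_k)=2$; moreover $q(G'_1)=2$. In particular, for each $k\ge 2$ there is a symmetric orthogonal matrix in $\mathcal{S}(G_k)$.
   Context: For a graph $G$ on $n$ vertices, $\mathcal{S}(G)$ is the set of real symmetric $n\times n$ matrices $A=[a_{ij}]$ with $a_{ij}\neq0$ for $i\ne j$ iff $\{i,j\}\in E(G)$ (diagonal unrestricted); $q(G)$ is the minimum number of distinct eigenvalues of a matrix in $\mathcal{S}(G)$. Double-ended candle: for $k\geq 2$, $G_k$ is the graph on $\{1,\dots,2k\}$ with levels $L_0=\{1\}$, $L_i=\{2i,2i+1\}$ ($1\le i\le k-1$), $L_k=\{2k\}$, where two vertices are adjacent iff they lie in consecutive levels. Single-ended candle: for $k\ge1$, $G'_k$ is the graph on $\{1,\dots,2k+1\}$ with levels $L_0=\{1\}$, $L_i=\{2i,2i+1\}$ ($1\le i\le k$), where vertices in consecutive levels are adjacent, additionally $2k$ and $2k+1$ are adjacent, and there are no other edges ($G'_1=K_3$). *)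

theory Defs
  imports "Jordan_Normal_Form.Char_Poly"
begin

text \<open>A simple graph on vertex set {1..n} is given by its order n and an adjacency
relation E on nat (only its restriction to {1..n} matters).
A real n x n matrix has rows/columns indexed 0..n-1; vertex i corresponds to index i-1.\<close>

definition S_G :: "nat \<Rightarrow> (nat \<Rightarrow> nat \<Rightarrow> bool) \<Rightarrow> real mat set" where
  "S_G n E = {A. A \<in> carrier_mat n n \<and> transpose_mat A = A \<and>
      (\<forall>i\<in>{1..n}. \<forall>j\<in>{1..n}. i \<noteq> j \<longrightarrow> (A $$ (i - 1, j - 1) \<noteq> 0 \<longleftrightarrow> E i j))}"

definition num_distinct_eigs :: "real mat \<Rightarrow> nat" where
  "num_distinct_eigs A = card {c. eigenvalue A c}"

definition q_G :: "nat \<Rightarrow> (nat \<Rightarrow> nat \<Rightarrow> bool) \<Rightarrow> nat" where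
  "q_G n E = (LEAST m. \<exists>A\<in>S_G n E. num_distinct_eigs A = m)"

text \<open>Levels: L_0 = {1}, L_i = {2i, 2i+1}, and (double-ended) L_k = {2k};
in all cases the level of vertex v is v div 2.\<close>
definition candle_level :: "nat \<Rightarrow> nat" where
  "candle_level v = v div 2"

definition dcandle :: "nat \<Rightarrow> nat \<Rightarrow> nat \<Rightarrow> bool" where
  "dcandle k u v = (u \<in> {1..2*k} \<and> v \<in> {1..2*k} \<and>
      (candle_level u = candle_level v + 1 \<or> candle_level v = candle_level u + 1))"

definition scandle :: "nat \<Rightarrow> nat \<Rightarrow> nat \<Rightarrow> bool" where
  "scandle k u v = (u \<in> {1..2*k+1} \<and> v \<in> {1..2*k+1} \<and>
      (candle_level u = candle_level v + 1 \<or> candle_level v = candle_level u + 1 \<or>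
       {u, v} = {2*k, 2*k+1}))"

end

theory Submission
  imports Defs "Jordan_Normal_Form.Jordan_Normal_Form_Existence"
begin

text \<open>A real symmetric matrix whose only eigenvalue is \<open>c\<close> equals \<open>c I\<close>: its shift \<open>A - c I\<close> is
symmetric with characteristic polynomial \<open>x\<^sup>n\<close>, hence nilpotent by the Jordan normal form, and a
symmetric nilpotent matrix vanishes. So every matrix in \<open>S(G)\<close> has at least two distinct
eigenvalues once \<open>G\<close> has an edge, and it suffices to find a symmetric orthogonal matrix in \<open>S(G)\<close>,
whose eigenvalues lie in \<open>{1, -1}\<close>.

For a candle such a matrix is \<open>E P E\<close>, where \<open>E\<close> is block diagonal along the levels with
symmetric orthogonal blocks that have no zero entry, and \<open>P\<close> is the permutation matrix of the
involution pairing \<open>2i - 1\<close> with \<open>2i\<close> (fixing the last vertex if their number is odd). The entry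
\<open>(E P E)\<^sub>x\<^sub>y\<close> is a sum over the vertices \<open>z\<close> on the level of \<open>y\<close> whose partner lies on the level
of \<open>x\<close>. There is at most one such \<open>z\<close>, and there is one exactly when the levels of \<open>x\<close> and \<open>y\<close>
are adjacent, or when both are the top level of a single-ended candle.\<close>

section \<open>Eigenvalues of real symmetric matrices\<close>

lemma symmetric_mat_entry:
  assumes "transpose_mat A = A" "A \<in> carrier_mat n n" "i < n" "j < n"
  shows "A $$ (i, j) = A $$ (j, i)"
  using assms by (metis carrier_matD index_transpose_mat(1))

lemma real_symmetric_complex_eigenvalue_real:
  fixes A :: "real mat"
  assumes A: "A \<in> carrier_mat n n" and sym: "transpose_mat A = A"
    and ev: "eigenvalue (map_mat complex_of_real A) a"
  shows "Im a = 0"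
proof -
  let ?C = "map_mat complex_of_real A"
  from ev obtain v where v: "v \<in> carrier_vec n" "v \<noteq> 0\<^sub>v n" "?C *\<^sub>v v = a \<cdot>\<^sub>v v"
    unfolding eigenvalue_def eigenvector_def using A by auto
  have row: "(\<Sum>j<n. complex_of_real (A $$ (i, j)) * v $ j) = a * v $ i" if "i < n" for i
  proof -
    have "row ?C i \<bullet> v = a * v $ i"
      using arg_cong[OF v(3), of "\<lambda>w. w $ i"] that A v(1) by simp
    then show ?thesis using that A v(1) by (auto simp: scalar_prod_def lessThan_atLeast0)
  qed
  \<comment> \<open>the Hermitian form \<open>v\<^sup>* A v\<close> equals both \<open>a |v|\<^sup>2\<close> and its own conjugate\<close>
  define s where "s = (\<Sum>i<n. \<Sum>j<n. cnj (v $ i) * complex_of_real (A $$ (i, j)) * v $ j)"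
  define N where "N = (\<Sum>i<n. cnj (v $ i) * v $ i)"
  have "s = (\<Sum>i<n. cnj (v $ i) * (\<Sum>j<n. complex_of_real (A $$ (i, j)) * v $ j))"
    unfolding s_def by (simp add: sum_distrib_left mult.assoc)
  also have "\<dots> = (\<Sum>i<n. cnj (v $ i) * (a * v $ i))" using row by simp
  also have "\<dots> = a * N" unfolding N_def by (simp add: sum_distrib_left algebra_simps)
  finally have s_eq: "s = a * N" .
  have "cnj s = (\<Sum>i<n. \<Sum>j<n. v $ i * complex_of_real (A $$ (i, j)) * cnj (v $ j))"
    unfolding s_def by simp
  also have "\<dots> = (\<Sum>j<n. \<Sum>i<n. v $ i * complex_of_real (A $$ (i, j)) * cnj (v $ j))"
    by (rule sum.swap)
  also have "\<dots> = s" unfolding s_def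
    by (intro sum.cong refl, subst symmetric_mat_entry[OF sym A]) (auto simp: algebra_simps)
  finally have s_real: "cnj s = s" .
  have N_eq: "N = complex_of_real (\<Sum>i<n. (cmod (v $ i))\<^sup>2)"
    unfolding N_def of_real_sum
    by (intro sum.cong refl) (simp add: complex_norm_square mult.commute del: of_real_power)
  obtain i where "i < n" "v $ i \<noteq> 0"
    using v(1,2) by (metis eq_vecI carrier_vecD index_zero_vec)
  then have "(\<Sum>i<n. (cmod (v $ i))\<^sup>2) > 0" by (intro sum_pos2[of _ i]) auto
  then have "N \<noteq> 0" "cnj N = N" unfolding N_eq by (simp_all del: of_real_power of_real_sum)
  with s_eq s_real have "cnj a = a" by (metis complex_cnj_mult mult_cancel_right)
  then show ?thesis by (metis Reals_cnj_iff complex_is_Real_iff)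
qed

lemma poly_prod_linear_factors_eq_0_iff:
  "poly (\<Prod>a\<leftarrow>as. [:-a, 1:]) x = (0 :: 'a :: idom) \<longleftrightarrow> x \<in> set as"
  by (induct as) auto

lemma eigenvalues_eq_roots:
  fixes A :: "'a :: field mat"
  assumes "A \<in> carrier_mat n n" and "char_poly A = (\<Prod>e\<leftarrow>es. [:-e, 1:])"
  shows "{c. eigenvalue A c} = set es"
  using eigenvalue_root_char_poly[OF assms(1)] unfolding assms(2) poly_prod_linear_factors_eq_0_iff
  by auto

interpretation of_real_poly_hom: map_poly_inj_comm_ring_hom "of_real :: real \<Rightarrow> complex" ..

lemma real_symmetric_char_poly_splits:
  fixes A :: "real mat"
  assumes A: "A \<in> carrier_mat n n" and sym: "transpose_mat A = A"
  shows "\<exists>es. char_poly A = (\<Prod>e\<leftarrow>es. [:-e, 1:])"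
proof -
  let ?C = "map_mat complex_of_real A"
  have C: "?C \<in> carrier_mat n n" using A by simp
  obtain as where cp: "char_poly ?C = (\<Prod>a\<leftarrow>as. [:-a, 1:])"
    using char_poly_factorized[OF C] by blast
  have real: "Im a = 0" if "a \<in> set as" for a
    using eigenvalues_eq_roots[OF C cp] that
    by (auto intro: real_symmetric_complex_eigenvalue_real[OF A sym])
  have "map_poly complex_of_real (\<Prod>e\<leftarrow>map Re as. [:-e, 1:]) = (\<Prod>a\<leftarrow>as. [:-a, 1:])"
    using real
  proof (induct as)
    case (Cons a as)
    have "map_poly complex_of_real [:-Re a, 1:] = [:-a, 1:]"
      using Cons(2) by (simp add: complex_eq_iff)
    moreover have "map_poly complex_of_real (\<Prod>e\<leftarrow>map Re as. [:-e, 1:]) = (\<Prod>a\<leftarrow>as. [:-a, 1:])"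
      using Cons by simp
    ultimately show ?case by (simp only: list.map prod_list.Cons of_real_poly_hom.hom_mult)
  qed simp
  then have "map_poly complex_of_real (char_poly A)
      = map_poly complex_of_real (\<Prod>e\<leftarrow>map Re as. [:-e, 1:])"
    using cp of_real_hom.char_poly_hom[OF A] by metis
  then have "char_poly A = (\<Prod>e\<leftarrow>map Re as. [:-e, 1:])"
    by simp
  then show ?thesis by blast
qed

lemma symmetric_square_eq_0_imp_eq_0:
  fixes C :: "real mat"
  assumes C: "C \<in> carrier_mat n n" and sym: "transpose_mat C = C" and sq: "C * C = 0\<^sub>m n n"
  shows "C = 0\<^sub>m n n"
proof (rule eq_matI)
  fix i j assume "i < dim_row (0\<^sub>m n n :: real mat)" "j < dim_col (0\<^sub>m n n :: real mat)"
  then have i: "i < n" and j: "j < n" by auto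
  have "(\<Sum>k\<in>{0..<n}. (C $$ (i, k))\<^sup>2) = (C * C) $$ (i, i)"
    using C i symmetric_mat_entry[OF sym C i] by (simp add: scalar_prod_def power2_eq_square)
  also have "\<dots> = 0" using sq i by simp
  finally have "\<forall>k\<in>{0..<n}. (C $$ (i, k))\<^sup>2 = 0"
    by (subst sum_nonneg_eq_0_iff[symmetric]) auto
  then show "C $$ (i, j) = 0\<^sub>m n n $$ (i, j)" using i j by auto
qed (use C in auto)

lemma pow_mat_add:
  assumes "C \<in> carrier_mat n n"
  shows "C ^\<^sub>m a * C ^\<^sub>m b = C ^\<^sub>m (a + b)"
proof (induct b)
  case (Suc b)
  have "C ^\<^sub>m a * C ^\<^sub>m Suc b = (C ^\<^sub>m a * C ^\<^sub>m b) * C"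
    using assms by (simp add: assoc_mult_mat[of _ n n _ n _ n])
  with Suc show ?case by simp
qed (use assms in simp)

lemma transpose_pow_mat:
  fixes C :: "'a :: comm_semiring_1 mat"
  assumes C: "C \<in> carrier_mat n n" and sym: "transpose_mat C = C"
  shows "transpose_mat (C ^\<^sub>m k) = C ^\<^sub>m k"
proof (induct k)
  case (Suc k)
  have "transpose_mat (C ^\<^sub>m Suc k) = C * C ^\<^sub>m k"
    using transpose_mult[OF pow_carrier_mat[OF C] C] Suc sym by simp
  also have "\<dots> = C ^\<^sub>m Suc k" using pow_mat_add[OF C, of 1 k] C by simp
  finally show ?case .
qed (use C in simp)

lemma symmetric_nilpotent_imp_eq_0:
  fixes C :: "real mat"
  assumes C: "C \<in> carrier_mat n n" and sym: "transpose_mat C = C"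
  shows "C ^\<^sub>m Suc m = 0\<^sub>m n n \<Longrightarrow> C = 0\<^sub>m n n"
proof (induct m)
  case (Suc m)
  let ?D = "C ^\<^sub>m Suc m"
  have "?D * ?D = C ^\<^sub>m Suc (Suc m) * C ^\<^sub>m m"
    using pow_mat_add[OF C] by (metis add_Suc add_Suc_right)
  also have "\<dots> = 0\<^sub>m n n" using Suc(2) C by simp
  finally have "?D = 0\<^sub>m n n"
    by (rule symmetric_square_eq_0_imp_eq_0[OF pow_carrier_mat[OF C] transpose_pow_mat[OF C sym]])
  then show ?case by (rule Suc(1))
qed (use C in simp)

lemma diag_block_mat_zeros:
  "diag_block_mat (map (\<lambda>(m, a). 0\<^sub>m m m) xs) =
    (0\<^sub>m (sum_list (map fst xs)) (sum_list (map fst xs)) :: 'a :: zero mat)"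
  by (induct xs) (auto simp: Let_def)

lemma char_poly_roots_zero_imp_nilpotent:
  fixes B :: "real mat"
  assumes B: "B \<in> carrier_mat n n" and cp: "char_poly B = (\<Prod>e\<leftarrow>es. [:-e, 1:])"
    and zero: "set es \<subseteq> {0}"
  shows "B ^\<^sub>m n = 0\<^sub>m n n"
proof -
  obtain n_as where jnf: "jordan_nf B n_as" using jordan_nf_exists[OF B cp] by blast
  obtain P Q where P: "P \<in> carrier_mat n n" and Q: "Q \<in> carrier_mat n n"
    and cp_jnf: "char_poly B = (\<Prod>(m, a)\<leftarrow>n_as. [:- a, 1:] ^ m)"
    and pow: "\<And>k. B ^\<^sub>m k = P * (jordan_matrix n_as) ^\<^sub>m k * Q"
    using jordan_nf_powE[OF B jnf] by blast
  from jnf have pos: "0 \<notin> fst ` set n_as" and "similar_mat B (jordan_matrix n_as)"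
    unfolding jordan_nf_def by auto
  then have "dim_row (jordan_matrix n_as) = n"
    using B by (metis carrier_matD(1) insert_subset similar_matD)
  then have size: "sum_list (map fst n_as) = n" by simp
  have block: "jordan_block m a ^\<^sub>m n = 0\<^sub>m m m" if mem: "(m, a) \<in> set n_as" for m a
  proof -
    have "m \<noteq> 0" using pos mem by force
    then have "poly (char_poly B) a = 0" unfolding cp_jnf using mem
      by (auto simp: poly_prod_list intro!: image_eqI[of _ _ "(m, a)"])
    then have "a = 0" using zero unfolding cp poly_prod_linear_factors_eq_0_iff by auto
    moreover have "m \<le> n" using size mem member_le_sum_list[of m "map fst n_as"] by force
    ultimately show ?thesis unfolding \<open>a = 0\<close> jordan_block_zero_pow by (intro eq_matI) auto
  qed
  have "jordan_matrix n_as ^\<^sub>m n = diag_block_mat (map (\<lambda>(m, a). 0\<^sub>m m m) n_as)"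
    unfolding jordan_matrix_pow using block by (intro arg_cong[of _ _ diag_block_mat]) auto
  also have "\<dots> = 0\<^sub>m n n" unfolding diag_block_mat_zeros size ..
  finally show ?thesis using pow P Q by simp
qed

lemma char_matrix_char_matrix:
  assumes "A \<in> carrier_mat n n"
  shows "char_matrix (char_matrix A c) d = char_matrix A (c + d)"
  using assms by (intro eq_matI) (auto simp: char_matrix_def)

lemma eigenvalue_char_matrix_shift:
  fixes A :: "'a :: field mat"
  assumes A: "A \<in> carrier_mat n n" and ev: "eigenvalue (char_matrix A c) d"
  shows "eigenvalue A (c + d)"
  using ev unfolding eigenvalue_char_matrix[OF A] eigenvalue_char_matrix[OF char_matrix_closed[OF A]]
    char_matrix_char_matrix[OF A] .

lemma real_symmetric_single_eigenvalue_imp_scalar: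
  fixes A :: "real mat"
  assumes A: "A \<in> carrier_mat n n" and sym: "transpose_mat A = A"
    and single: "{e. eigenvalue A e} \<subseteq> {c}"
  shows "A = c \<cdot>\<^sub>m 1\<^sub>m n"
proof -
  let ?B = "char_matrix A c"
  have B: "?B \<in> carrier_mat n n" using A by simp
  have symB: "transpose_mat ?B = ?B"
    using A symmetric_mat_entry[OF sym A] by (intro eq_matI) (auto simp: char_matrix_def)
  obtain es where cp: "char_poly ?B = (\<Prod>e\<leftarrow>es. [:-e, 1:])"
    using real_symmetric_char_poly_splits[OF B symB] by blast
  have "set es \<subseteq> {0}"
  proof
    fix d assume "d \<in> set es"
    then have "eigenvalue A (c + d)"
      using eigenvalues_eq_roots[OF B cp] by (intro eigenvalue_char_matrix_shift[OF A]) auto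
    then show "d \<in> {0}" using single by auto
  qed
  from char_poly_roots_zero_imp_nilpotent[OF B cp this] have "?B = 0\<^sub>m n n"
    using symmetric_nilpotent_imp_eq_0[OF B symB] B by (cases n) (auto simp: mat_eq_iff)
  then show ?thesis
    using A by (intro eq_matI) (auto simp: char_matrix_def mat_eq_iff)
qed

lemma real_symmetric_two_eigenvalues:
  fixes A :: "real mat"
  assumes A: "A \<in> carrier_mat n n" and sym: "transpose_mat A = A"
    and off_diag: "i < n" "j < n" "i \<noteq> j" "A $$ (i, j) \<noteq> 0"
  shows "card {c. eigenvalue A c} \<ge> 2"
proof -
  obtain es where "char_poly A = (\<Prod>e\<leftarrow>es. [:-e, 1:])"
    using real_symmetric_char_poly_splits[OF A sym] by blast
  from eigenvalues_eq_roots[OF A this] have fin: "finite {c. eigenvalue A c}" by simp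
  show ?thesis
  proof (rule ccontr)
    assume "\<not> card {c. eigenvalue A c} \<ge> 2"
    then have "card {c. eigenvalue A c} \<le> Suc 0" by simp
    then have one: "\<forall>a\<in>{c. eigenvalue A c}. \<forall>b\<in>{c. eigenvalue A c}. a = b"
      using card_le_Suc0_iff_eq[OF fin] by blast
    obtain c where "{c. eigenvalue A c} \<subseteq> {c}"
    proof (cases "\<exists>c. eigenvalue A c")
      case True
      then obtain c where "eigenvalue A c" by blast
      with one show ?thesis by (intro that[of c]) blast
    qed (use that in blast)
    from real_symmetric_single_eigenvalue_imp_scalar[OF A sym this] off_diag show False by simp
  qed
qed

lemma eigenvalue_of_involution:
  fixes A :: "real mat"
  assumes A: "A \<in> carrier_mat n n" and sq: "A * A = 1\<^sub>m n" and ev: "eigenvalue A c"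
  shows "c = 1 \<or> c = -1"
proof -
  from ev obtain v where v: "v \<in> carrier_vec n" "v \<noteq> 0\<^sub>v n" "A *\<^sub>v v = c \<cdot>\<^sub>v v"
    unfolding eigenvalue_def eigenvector_def using A by auto
  have "v = (A * A) *\<^sub>v v" using sq v by simp
  also have "\<dots> = (c * c) \<cdot>\<^sub>v v" using A v by (simp add: mult_mat_vec smult_smult_assoc)
  finally have v_eq: "v = (c * c) \<cdot>\<^sub>v v" .
  obtain i where "i < n" "v $ i \<noteq> 0"
    using v(1,2) by (metis eq_vecI carrier_vecD index_zero_vec)
  with v_eq v(1) have "c * c = 1" by (metis carrier_vecD index_smult_vec(1) mult_cancel_right2)
  then show ?thesis by (simp add: square_eq_1_iff)
qed

lemma q_G_eq_2:
  assumes n: "n \<ge> 2" and edge: "G 1 2"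
    and A: "A \<in> S_G n G" and sq: "A * A = 1\<^sub>m n"
  shows "q_G n G = 2"
proof -
  have lower: "2 \<le> num_distinct_eigs B" if B: "B \<in> S_G n G" for B
  proof -
    from B have "B \<in> carrier_mat n n" "transpose_mat B = B"
      and adj: "\<forall>i\<in>{1..n}. \<forall>j\<in>{1..n}. i \<noteq> j \<longrightarrow> (B $$ (i - 1, j - 1) \<noteq> 0 \<longleftrightarrow> G i j)"
      unfolding S_G_def by blast+
    moreover have "B $$ (0, 1) \<noteq> 0" using adj[rule_format, of 1 2] n edge by simp
    ultimately show ?thesis
      unfolding num_distinct_eigs_def using real_symmetric_two_eigenvalues[of B n 0 1] n by simp
  qed
  have "{c. eigenvalue A c} \<subseteq> {1, -1}"
    using eigenvalue_of_involution[OF _ sq] A unfolding S_G_def by auto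
  then have "card {c. eigenvalue A c} \<le> card {1, -1 :: real}" by (intro card_mono) simp_all
  with lower[OF A] have "num_distinct_eigs A = 2" unfolding num_distinct_eigs_def by simp
  show ?thesis unfolding q_G_def
  proof (rule Least_equality)
    show "\<exists>B\<in>S_G n G. num_distinct_eigs B = 2" using A \<open>num_distinct_eigs A = 2\<close> by blast
  qed (use lower in blast)
qed

section \<open>Matrices indexed by vertices\<close>

definition vertex_mat :: "nat \<Rightarrow> (nat \<Rightarrow> nat \<Rightarrow> 'a) \<Rightarrow> 'a mat" where
  "vertex_mat n f = mat n n (\<lambda>(i, j). f (Suc i) (Suc j))"

lemma vertex_mat_carrier [simp]: "vertex_mat n f \<in> carrier_mat n n"
  by (simp add: vertex_mat_def)

lemma dim_vertex_mat [simp]: "dim_row (vertex_mat n f) = n" "dim_col (vertex_mat n f) = n"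
  by (simp_all add: vertex_mat_def)

lemma index_vertex_mat [simp]:
  "i < n \<Longrightarrow> j < n \<Longrightarrow> vertex_mat n f $$ (i, j) = f (Suc i) (Suc j)"
  by (simp add: vertex_mat_def)

lemma vertex_mat_vertex_index:
  "x \<in> {1..n} \<Longrightarrow> y \<in> {1..n} \<Longrightarrow> vertex_mat n f $$ (x - 1, y - 1) = f x y"
  by (cases x; cases y) auto

lemma vertex_mat_cong:
  assumes "\<And>x y. x \<in> {1..n} \<Longrightarrow> y \<in> {1..n} \<Longrightarrow> f x y = g x y"
  shows "vertex_mat n f = vertex_mat n g"
  using assms by (intro eq_matI) auto

lemma transpose_vertex_mat: "transpose_mat (vertex_mat n f) = vertex_mat n (\<lambda>x y. f y x)"
  by (intro eq_matI) auto

lemma one_mat_eq_vertex_mat: "1\<^sub>m n = vertex_mat n (\<lambda>x y. if x = y then 1 else 0)"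
  by (intro eq_matI) auto

lemma vertex_mat_mult:
  "vertex_mat n f * vertex_mat n g = vertex_mat n (\<lambda>x y. \<Sum>z\<in>{1..n}. f x z * g z y)"
proof (intro eq_matI)
  fix i j assume "i < dim_row (vertex_mat n (\<lambda>x y. \<Sum>z\<in>{1..n}. f x z * g z y))"
    "j < dim_col (vertex_mat n (\<lambda>x y. \<Sum>z\<in>{1..n}. f x z * g z y))"
  then have "i < n" "j < n" by simp_all
  have "(\<Sum>l<n. f (Suc i) (Suc l) * g (Suc l) (Suc j)) = (\<Sum>z\<in>{1..n}. f (Suc i) z * g z (Suc j))"
    by (rule sum.reindex_bij_witness[of _ "\<lambda>z. z - 1" Suc]) auto
  then show "(vertex_mat n f * vertex_mat n g) $$ (i, j) =
      vertex_mat n (\<lambda>x y. \<Sum>z\<in>{1..n}. f x z * g z y) $$ (i, j)"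
    using \<open>i < n\<close> \<open>j < n\<close> by (simp add: scalar_prod_def lessThan_atLeast0)
qed auto

definition perm_vertex_mat :: "nat \<Rightarrow> (nat \<Rightarrow> nat) \<Rightarrow> 'a :: zero_neq_one mat" where
  "perm_vertex_mat n \<sigma> = vertex_mat n (\<lambda>x y. if y = \<sigma> x then 1 else 0)"

lemma vertex_mat_mult_perm:
  fixes f :: "nat \<Rightarrow> nat \<Rightarrow> 'a :: semiring_1"
  assumes maps: "\<And>v. v \<in> {1..n} \<Longrightarrow> \<sigma> v \<in> {1..n}"
    and invol: "\<And>v. v \<in> {1..n} \<Longrightarrow> \<sigma> (\<sigma> v) = v"
  shows "vertex_mat n f * perm_vertex_mat n \<sigma> = vertex_mat n (\<lambda>x y. f x (\<sigma> y))"
  unfolding perm_vertex_mat_def vertex_mat_mult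
proof (rule vertex_mat_cong)
  fix x y assume "y \<in> {1..n}"
  then have "(\<Sum>z\<in>{1..n}. f x z * (if y = \<sigma> z then 1 else 0))
      = (\<Sum>z\<in>{1..n}. if \<sigma> y = z then f x z else 0)"
    by (intro sum.cong refl) (use invol \<open>y \<in> {1..n}\<close> in auto)
  also have "\<dots> = f x (\<sigma> y)" using maps \<open>y \<in> {1..n}\<close> by simp
  finally show "(\<Sum>z\<in>{1..n}. f x z * (if y = \<sigma> z then 1 else 0)) = f x (\<sigma> y)" .
qed

lemma perm_vertex_mat_involution:
  assumes maps: "\<And>v. v \<in> {1..n} \<Longrightarrow> \<sigma> v \<in> {1..n}"
    and invol: "\<And>v. v \<in> {1..n} \<Longrightarrow> \<sigma> (\<sigma> v) = v"
  shows "perm_vertex_mat n \<sigma> * perm_vertex_mat n \<sigma> = (1\<^sub>m n :: 'a :: semiring_1 mat)"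
proof -
  have "perm_vertex_mat n \<sigma> * perm_vertex_mat n \<sigma>
      = vertex_mat n (\<lambda>x y. if \<sigma> y = \<sigma> x then 1 else (0 :: 'a))"
    by (subst (1) perm_vertex_mat_def) (rule vertex_mat_mult_perm[OF assms])
  also have "\<dots> = 1\<^sub>m n"
    unfolding one_mat_eq_vertex_mat by (rule vertex_mat_cong) (metis invol)
  finally show ?thesis .
qed

lemma transpose_perm_vertex_mat:
  assumes "\<And>v. v \<in> {1..n} \<Longrightarrow> \<sigma> (\<sigma> v) = v"
  shows "transpose_mat (perm_vertex_mat n \<sigma>) = perm_vertex_mat n \<sigma>"
  unfolding perm_vertex_mat_def transpose_vertex_mat
  by (rule vertex_mat_cong) (metis assms)

lemma conjugate_involution:
  fixes E P :: "'a :: comm_ring_1 mat"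
  assumes E: "E \<in> carrier_mat n n" and P: "P \<in> carrier_mat n n"
    and EE: "E * E = 1\<^sub>m n" and PP: "P * P = 1\<^sub>m n"
    and symE: "transpose_mat E = E" and symP: "transpose_mat P = P"
  shows "transpose_mat (E * P * E) = E * P * E" "(E * P * E) * (E * P * E) = 1\<^sub>m n"
proof -
  have "transpose_mat (E * P * E) = transpose_mat E * transpose_mat (E * P)"
    using E P by (intro transpose_mult) auto
  then show "transpose_mat (E * P * E) = E * P * E"
    using E P by (simp add: transpose_mult[OF E P] symE symP)
  have "(E * P * E) * (E * P * E) = E * P * (E * E) * P * E"
    using E P by (simp add: assoc_mult_mat[of _ n n _ n _ n])
  also have "\<dots> = E * (P * P) * E"
    using E P by (simp add: EE assoc_mult_mat[of _ n n _ n _ n])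
  also have "\<dots> = 1\<^sub>m n" using E by (simp add: PP EE)
  finally show "(E * P * E) * (E * P * E) = 1\<^sub>m n" .
qed

section \<open>An orthogonal involution adapted to the candles\<close>

lemma sum_neq_zero_iff_subsingleton_support:
  fixes g :: "'a \<Rightarrow> 'b :: comm_monoid_add"
  assumes "finite V" and uniq: "\<And>z z'. z \<in> V \<Longrightarrow> z' \<in> V \<Longrightarrow> g z \<noteq> 0 \<Longrightarrow> g z' \<noteq> 0 \<Longrightarrow> z = z'"
  shows "(\<Sum>z\<in>V. g z) \<noteq> 0 \<longleftrightarrow> (\<exists>z\<in>V. g z \<noteq> 0)"
proof
  assume "(\<Sum>z\<in>V. g z) \<noteq> 0"
  then show "\<exists>z\<in>V. g z \<noteq> 0" by (meson sum.neutral)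
next
  assume "\<exists>z\<in>V. g z \<noteq> 0"
  then obtain z0 where "z0 \<in> V" "g z0 \<noteq> 0" by blast
  have "(\<Sum>z\<in>V. g z) = g z0 + (\<Sum>z\<in>V - {z0}. g z)"
    using \<open>finite V\<close> \<open>z0 \<in> V\<close> by (rule sum.remove)
  also have "(\<Sum>z\<in>V - {z0}. g z) = 0"
    using uniq[OF \<open>z0 \<in> V\<close> _ \<open>g z0 \<noteq> 0\<close>] by (intro sum.neutral) blast
  finally have "(\<Sum>z\<in>V. g z) = g z0" by simp
  with \<open>g z0 \<noteq> 0\<close> show "(\<Sum>z\<in>V. g z) \<noteq> 0" by simp
qed

lemma candle_level_eq_iff: "candle_level z = L \<longleftrightarrow> z = 2 * L \<or> z = 2 * L + 1"
  unfolding candle_level_def by auto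

lemma candle_level_even_pos: "even v \<Longrightarrow> 1 \<le> v \<Longrightarrow> 1 \<le> candle_level v"
  by (auto simp: candle_level_def elim!: evenE)

lemma candle_level_class:
  assumes x: "x \<in> {1..n}"
  shows "{z \<in> {1..n}. candle_level z = candle_level x} =
    (if x = 1 \<or> x = n \<and> even n then {x} else {2 * candle_level x, 2 * candle_level x + 1})"
proof -
  define L where "L = candle_level x"
  have C: "{z \<in> {1..n}. candle_level z = L} = {2 * L, 2 * L + 1} \<inter> {1..n}"
    by (auto simp: candle_level_eq_iff)
  have "x = 2 * L \<or> x = 2 * L + 1" using candle_level_eq_iff[of x L] L_def by blast
  then show ?thesis
    unfolding L_def[symmetric] C using x by auto presburger
qed

definition candle_pairing :: "nat \<Rightarrow> nat \<Rightarrow> nat" where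
  "candle_pairing n v = (if even v then v - 1 else if v < n then v + 1 else v)"

lemma candle_pairing_mem: "v \<in> {1..n} \<Longrightarrow> candle_pairing n v \<in> {1..n}"
  unfolding candle_pairing_def by auto

lemma candle_pairing_involution: "v \<in> {1..n} \<Longrightarrow> candle_pairing n (candle_pairing n v) = v"
  unfolding candle_pairing_def by auto

lemma candle_level_candle_pairing:
  assumes "1 \<le> v"
  shows "candle_level (candle_pairing n v) =
    (if even v then candle_level v - 1 else if v < n then candle_level v + 1 else candle_level v)"
  using assms by (auto simp: candle_pairing_def candle_level_def elim!: evenE oddE)

lemma candle_level_pairing_inj:
  assumes "z \<in> {1..n}" "z' \<in> {1..n}" and L: "candle_level z = candle_level z'"
    and "candle_level (candle_pairing n z) = candle_level (candle_pairing n z')"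
  shows "z = z'"
proof -
  have "even z \<longleftrightarrow> even z'"
    using assms candle_level_candle_pairing[of z n] candle_level_candle_pairing[of z' n]
      candle_level_even_pos[of z] candle_level_even_pos[of z']
    by (auto split: if_splits)
  then have "z mod 2 = z' mod 2" by presburger
  moreover have "z div 2 = z' div 2" using L by (simp add: candle_level_def)
  ultimately show ?thesis by (metis div_mod_decomp)
qed

definition candle_adj :: "nat \<Rightarrow> nat \<Rightarrow> nat \<Rightarrow> bool" where
  "candle_adj n x y \<longleftrightarrow> candle_level x = candle_level y + 1 \<or> candle_level y = candle_level x + 1
    \<or> odd n \<and> candle_level x = candle_level n \<and> candle_level y = candle_level n"

lemma candle_adj_iff_ex_paired_vertex:
  assumes x: "x \<in> {1..n}" and y: "y \<in> {1..n}"
  shows "candle_adj n x y \<longleftrightarrow>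
    (\<exists>z\<in>{1..n}. candle_level z = candle_level y \<and> candle_level (candle_pairing n z) = candle_level x)"
    (is "_ \<longleftrightarrow> ?paired")
proof
  assume "candle_adj n x y"
  then consider "candle_level x = candle_level y + 1" | "candle_level y = candle_level x + 1"
    | "odd n" "candle_level x = candle_level n" "candle_level y = candle_level n"
    unfolding candle_adj_def by blast
  then show ?paired
  proof cases
    case 1
    then show ?thesis using x
      by (intro bexI[of _ "2 * candle_level y + 1"]) (auto simp: candle_level_def candle_pairing_def)
  next
    case 2
    then show ?thesis using y
      by (intro bexI[of _ "2 * candle_level y"]) (auto simp: candle_level_def candle_pairing_def)
  next
    case 3
    then show ?thesis using y by (intro bexI[of _ n]) (auto simp: candle_pairing_def)
  qed
next
  assume ?paired
  then obtain z where "z \<in> {1..n}" "candle_level z = candle_level y"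
    "candle_level (candle_pairing n z) = candle_level x" by blast
  then show "candle_adj n x y"
    using candle_level_candle_pairing[of z n] candle_level_even_pos[of z]
    unfolding candle_adj_def by (auto split: if_splits)
qed

text \<open>On each two-element level \<open>{2L, 2L + 1}\<close> this is the reflection \<open>[[3/5, 4/5], [4/5, -3/5]]\<close>.\<close>
definition level_reflection :: "nat \<Rightarrow> nat \<Rightarrow> nat \<Rightarrow> real" where
  "level_reflection n u v =
    (if candle_level u \<noteq> candle_level v then 0
     else if u \<noteq> v then 4/5
     else if u = 1 \<or> u = n \<and> even n then 1
     else if even u then 3/5 else -3/5)"

lemma level_reflection_nonzero_iff: "level_reflection n u v \<noteq> 0 \<longleftrightarrow> candle_level u = candle_level v"
  unfolding level_reflection_def by auto

lemma level_reflection_sym: "level_reflection n u v = level_reflection n v u"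
  unfolding level_reflection_def by auto

lemma level_reflection_orthogonal:
  assumes x: "x \<in> {1..n}" and y: "y \<in> {1..n}"
  shows "(\<Sum>z\<in>{1..n}. level_reflection n x z * level_reflection n z y) = (if x = y then 1 else 0)"
proof -
  let ?E = "level_reflection n" and ?C = "{z \<in> {1..n}. candle_level z = candle_level x}"
  have "(\<Sum>z\<in>{1..n}. ?E x z * ?E z y) = (\<Sum>z\<in>?C. ?E x z * ?E z y)"
    using level_reflection_nonzero_iff[of n x] by (intro sum.mono_neutral_right) auto
  also have "\<dots> = (if x = y then 1 else 0)"
  proof (cases "x = 1 \<or> x = n \<and> even n")
    case True
    then have C: "?C = {x}" using candle_level_class[OF x] by (simp only: if_P)
    moreover have "?E x x = 1" using True by (simp add: level_reflection_def)
    moreover have "?E x y = 0" if "x \<noteq> y"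
    proof -
      have "y \<notin> ?C" using that unfolding C by simp
      then show ?thesis using y level_reflection_nonzero_iff[of n x y] by auto
    qed
    ultimately show ?thesis unfolding C by auto
  next
    case False
    define L where "L = candle_level x"
    have C: "?C = {2 * L, 2 * L + 1}"
      using candle_level_class[OF x] unfolding L_def by (simp only: if_not_P[OF False])
    then have "2 * L + 1 \<in> {1..n}" "2 * L \<in> {1..n}" by blast+
    then have "1 \<le> L" "2 * L < n" by auto
    moreover have "candle_level (2 * L) = L" "candle_level (Suc (2 * L)) = L"
      by (simp_all add: candle_level_def)
    moreover have "odd (Suc (2 * L))" by simp
    ultimately have block: "?E (2 * L) (2 * L) = 3/5" "?E (Suc (2 * L)) (Suc (2 * L)) = -3/5"
      "?E (2 * L) (Suc (2 * L)) = 4/5" "?E (Suc (2 * L)) (2 * L) = 4/5"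
      unfolding level_reflection_def by auto
    have "x \<in> ?C" using x by simp
    then have x_cases: "x = 2 * L \<or> x = 2 * L + 1" unfolding C by simp
    show ?thesis
    proof (cases "y \<in> ?C")
      case True
      then have "y = 2 * L \<or> y = 2 * L + 1" unfolding C by simp
      with x_cases show ?thesis unfolding C by (auto simp: block)
    next
      case False
      then have "?E z y = 0" if "z \<in> ?C" for z
        using that y level_reflection_nonzero_iff[of n z y] by auto
      then show ?thesis using False \<open>x \<in> ?C\<close> by (auto intro: sum.neutral)
    qed
  qed
  finally show ?thesis .
qed

definition candle_involution :: "nat \<Rightarrow> real mat" where
  "candle_involution n =
    vertex_mat n (level_reflection n) * perm_vertex_mat n (candle_pairing n) * vertex_mat n (level_reflection n)"

lemma
  shows transpose_candle_involution: "transpose_mat (candle_involution n) = candle_involution n"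
    and candle_involution_squared: "candle_involution n * candle_involution n = 1\<^sub>m n"
proof -
  let ?E = "vertex_mat n (level_reflection n)" and ?P = "perm_vertex_mat n (candle_pairing n) :: real mat"
  have EE: "?E * ?E = 1\<^sub>m n"
    unfolding vertex_mat_mult one_mat_eq_vertex_mat
    by (rule vertex_mat_cong) (rule level_reflection_orthogonal)
  have symE: "transpose_mat ?E = ?E"
    unfolding transpose_vertex_mat using level_reflection_sym[of n] by presburger
  have PP: "?P * ?P = 1\<^sub>m n"
    by (rule perm_vertex_mat_involution[OF candle_pairing_mem candle_pairing_involution])
  have symP: "transpose_mat ?P = ?P"
    by (rule transpose_perm_vertex_mat[OF candle_pairing_involution])
  have "?P \<in> carrier_mat n n" by (simp add: perm_vertex_mat_def)
  from conjugate_involution[OF vertex_mat_carrier this EE PP symE symP]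
  show "transpose_mat (candle_involution n) = candle_involution n"
    "candle_involution n * candle_involution n = 1\<^sub>m n"
    unfolding candle_involution_def by simp_all
qed

lemma candle_involution_eq:
  "candle_involution n = vertex_mat n (\<lambda>x y. \<Sum>z\<in>{1..n}.
     level_reflection n x (candle_pairing n z) * level_reflection n z y)"
proof -
  have EP: "vertex_mat n (level_reflection n) * perm_vertex_mat n (candle_pairing n)
      = vertex_mat n (\<lambda>x y. level_reflection n x (candle_pairing n y))"
    by (rule vertex_mat_mult_perm[OF candle_pairing_mem candle_pairing_involution])
  show ?thesis unfolding candle_involution_def EP vertex_mat_mult ..
qed

lemma candle_involution_nonzero_iff:
  assumes x: "x \<in> {1..n}" and y: "y \<in> {1..n}"
  shows "candle_involution n $$ (x - 1, y - 1) \<noteq> 0 \<longleftrightarrow> candle_adj n x y"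
proof -
  let ?g = "\<lambda>z. level_reflection n x (candle_pairing n z) * level_reflection n z y"
  have g_nonzero: "?g z \<noteq> 0 \<longleftrightarrow>
      candle_level z = candle_level y \<and> candle_level (candle_pairing n z) = candle_level x" for z
    using level_reflection_nonzero_iff[of n x "candle_pairing n z"] level_reflection_nonzero_iff[of n z y]
    by auto
  have "candle_involution n $$ (x - 1, y - 1) = (\<Sum>z\<in>{1..n}. ?g z)"
    using x y by (simp only: candle_involution_eq vertex_mat_vertex_index)
  also have "\<dots> \<noteq> 0 \<longleftrightarrow> (\<exists>z\<in>{1..n}. ?g z \<noteq> 0)"
  proof (rule sum_neq_zero_iff_subsingleton_support)
    fix z z' assume "z \<in> {1..n}" "z' \<in> {1..n}" "?g z \<noteq> 0" "?g z' \<noteq> 0"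
    then show "z = z'" unfolding g_nonzero by (intro candle_level_pairing_inj[of z n z']) simp_all
  qed simp
  also have "\<dots> \<longleftrightarrow> (\<exists>z\<in>{1..n}. candle_level z = candle_level y \<and> candle_level (candle_pairing n z) = candle_level x)"
    by (simp only: g_nonzero)
  finally show ?thesis unfolding candle_adj_iff_ex_paired_vertex[OF x y] .
qed

lemma candle_involution_in_S_G:
  assumes "\<And>x y. x \<in> {1..n} \<Longrightarrow> y \<in> {1..n} \<Longrightarrow> x \<noteq> y \<Longrightarrow> G x y \<longleftrightarrow> candle_adj n x y"
  shows "candle_involution n \<in> S_G n G"
  unfolding S_G_def
  using transpose_candle_involution candle_involution_nonzero_iff assms
  by (simp add: candle_involution_eq)

lemma dcandle_involution: "candle_involution (2 * k) \<in> S_G (2 * k) (dcandle k)"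
  by (rule candle_involution_in_S_G) (simp add: dcandle_def candle_adj_def)

lemma scandle_involution: "candle_involution (2 * k + 1) \<in> S_G (2 * k + 1) (scandle k)"
proof (rule candle_involution_in_S_G)
  fix x y assume x: "x \<in> {1..2 * k + 1}" and y: "y \<in> {1..2 * k + 1}" and "x \<noteq> y"
  then have "candle_level x = k \<and> candle_level y = k \<longleftrightarrow> {x, y} = {2 * k, 2 * k + 1}"
    unfolding candle_level_def by (auto simp: doubleton_eq_iff)
  moreover have "candle_level (2 * k + 1) = k" by (simp add: candle_level_def)
  ultimately show "scandle k x y \<longleftrightarrow> candle_adj (2 * k + 1) x y"
    using x y by (auto simp: scandle_def candle_adj_def)
qed

theorem mainTheorem2:
  shows "(\<forall>k::nat. k \<ge> 2 \<longrightarrow>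
            q_G (2*k) (dcandle k) = 2 \<and> q_G (2*k+1) (scandle k) = 2)
       \<and> q_G 3 (scandle 1) = 2
       \<and> (\<forall>k::nat. k \<ge> 2 \<longrightarrow>
            (\<exists>A\<in>S_G (2*k) (dcandle k). A * transpose_mat A = 1\<^sub>m (2*k)))"
proof (intro conjI allI impI)
  fix k :: nat assume k: "k \<ge> 2"
  show "q_G (2 * k) (dcandle k) = 2"
    using k by (intro q_G_eq_2[OF _ _ dcandle_involution candle_involution_squared])
      (auto simp: dcandle_def candle_level_def)
  show "q_G (2 * k + 1) (scandle k) = 2"
    using k by (intro q_G_eq_2[OF _ _ scandle_involution candle_involution_squared])
      (auto simp: scandle_def candle_level_def)
  show "\<exists>A\<in>S_G (2 * k) (dcandle k). A * transpose_mat A = 1\<^sub>m (2 * k)"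
    using dcandle_involution transpose_candle_involution candle_involution_squared by metis
next
  show "q_G 3 (scandle 1) = 2"
    using q_G_eq_2[OF _ _ scandle_involution[of 1] candle_involution_squared]
    by (simp add: scandle_def candle_level_def)
qed

end
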